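(* Let $k$ be an algebraically closed field of characteristic zero, $n\ge1$, $q\in k$ a primitive $2n$-th root of unity. Let $H_{4n}^*$ be the Hopf algebra generated by $\alpha,\eta$ with relations $\alpha^{2n}=1$, $\eta^2=1-\alpha^2$, $\alpha\eta=-\eta\alpha$, and $\Delta(\alpha)=\alpha\otimes\alpha$, $\Delta(\eta)=\eta\otimes1+\alpha\otimes\eta$, $\epsilon(\alpha)=1$, $\epsilon(\eta)=0$, $S(\alpha)=\alpha^{-1}$, $S(\eta)=-\alpha^{-1}\eta$. Let $\mathfrak wH_{4n}^*$ be the weak Hopf algebra generated by $G,X$ with relations $G^{2n+1}=G$, $GX=-XG$, $X^2=1-G^2$, and $\Delta(G)=G\otimes G$, $\Delta(X)=X\otimes1+G\otimes X$, $\epsilon(G)=1$, $\epsilon(X)=0$, $T(G)=G^{2n-1}$, $T(X)=-G^{2n-1}X$. Let $J=G^{2n}$, $\mathfrak w_1=\mathfrak wH_{4n}^*J$, $\mathfrak w_2=\mathfrak wH_{4n}^*(1-J)$. Then $\mathfrak wH_{4n}^*=\mathfrak w_1\oplus\mathfrak w_2$ as a direct sum of two-sided ideals; moreover $\mathfrak w_1$ (with unit $J$ and the restricted comultiplication and counit) is isomorphic to $H_{4n}^*$ as Hopf algebras, and $\mathfrak w_2\cong k[y]/(y^2-1)$ as algebras.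
   Context: $H_{4n}^*$ here is the dual of the Hopf algebra $H_{4n}$ (generated by $z,x$, $z^{2n}=1$, $zx=qxz$, $x^2=0$) with the parameter normalized to $a=1$, presented by the stated generators and relations. *)

theory Defs
  imports "HOL-Computational_Algebra.Polynomial"
begin

text \<open>Elements of the free algebra k<a,b> are finitely supported coefficient functions on
  words over the two-letter alphabet bool.  Letter False is the first generator
  (G, resp. alpha), letter True is the second generator (X, resp. eta).\<close>

type_synonym 'k fa = "bool list \<Rightarrow> 'k"
type_synonym 'k fa2 = "bool list \<times> bool list \<Rightarrow> 'k"

definition fa_carrier :: "('k::zero) fa set" where
  "fa_carrier = {p. finite {w. p w \<noteq> 0}}"

definition fzero :: "('k::zero) fa" where "fzero = (\<lambda>w. 0)"
definition fone :: "('k::{zero,one}) fa" where "fone = (\<lambda>w. if w = [] then 1 else 0)"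
definition fbasis :: "bool list \<Rightarrow> ('k::{zero,one}) fa" where
  "fbasis u = (\<lambda>w. if w = u then 1 else 0)"
definition fgen :: "bool \<Rightarrow> ('k::{zero,one}) fa" where "fgen b = fbasis [b]"
definition fadd :: "('k::plus) fa \<Rightarrow> 'k fa \<Rightarrow> 'k fa" where "fadd p q = (\<lambda>w. p w + q w)"
definition fsub :: "('k::minus) fa \<Rightarrow> 'k fa \<Rightarrow> 'k fa" where "fsub p q = (\<lambda>w. p w - q w)"
definition fscale :: "'k::times \<Rightarrow> 'k fa \<Rightarrow> 'k fa" where "fscale c p = (\<lambda>w. c * p w)"

definition fmul :: "('k::comm_ring_1) fa \<Rightarrow> 'k fa \<Rightarrow> 'k fa" where
  "fmul p q = (\<lambda>w. \<Sum>i\<le>length w. p (take i w) * q (drop i w))"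

primrec fpow :: "('k::comm_ring_1) fa \<Rightarrow> nat \<Rightarrow> 'k fa" where
  "fpow p 0 = fone"
| "fpow p (Suc m) = fmul p (fpow p m)"

abbreviation fG :: "('k::comm_ring_1) fa" where "fG \<equiv> fgen False"
abbreviation fX :: "('k::comm_ring_1) fa" where "fX \<equiv> fgen True"

inductive_set fideal :: "('k::comm_ring_1) fa set \<Rightarrow> 'k fa set" for R where
  gen: "r \<in> R \<Longrightarrow> r \<in> fideal R"
| zero: "fzero \<in> fideal R"
| add: "x \<in> fideal R \<Longrightarrow> y \<in> fideal R \<Longrightarrow> fadd x y \<in> fideal R"
| mult: "x \<in> fideal R \<Longrightarrow> a \<in> fa_carrier \<Longrightarrow> b \<in> fa_carrier \<Longrightarrow> fmul a (fmul x b) \<in> fideal R"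

definition wrels :: "nat \<Rightarrow> ('k::comm_ring_1) fa set" where
  "wrels n = {fsub (fpow fG (2*n+1)) fG,
              fadd (fmul fG fX) (fmul fX fG),
              fsub (fmul fX fX) (fsub fone (fmul fG fG))}"

definition hrels :: "nat \<Rightarrow> ('k::comm_ring_1) fa set" where
  "hrels n = {fsub (fpow fG (2*n)) fone,
              fsub (fmul fX fX) (fsub fone (fmul fG fG)),
              fadd (fmul fG fX) (fmul fX fG)}"

definition wI :: "nat \<Rightarrow> ('k::comm_ring_1) fa set" where "wI n = fideal (wrels n)"
definition hI :: "nat \<Rightarrow> ('k::comm_ring_1) fa set" where "hI n = fideal (hrels n)"

definition fJ :: "nat \<Rightarrow> ('k::comm_ring_1) fa" where "fJ n = fpow fG (2*n)"
definition W1 :: "nat \<Rightarrow> ('k::comm_ring_1) fa set" where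
  "W1 n = {fmul p (fJ n) | p. p \<in> fa_carrier}"
definition W2 :: "nat \<Rightarrow> ('k::comm_ring_1) fa set" where
  "W2 n = {fmul p (fsub fone (fJ n)) | p. p \<in> fa_carrier}"

definition in_mod :: "('k::comm_ring_1) fa set \<Rightarrow> 'k fa set \<Rightarrow> 'k fa \<Rightarrow> bool" where
  "in_mod I S x \<longleftrightarrow> (\<exists>s\<in>S. fsub x s \<in> I)"

definition t_carrier :: "('k::zero) fa2 set" where
  "t_carrier = {t. finite {uv. t uv \<noteq> 0}}"
definition tzero :: "('k::zero) fa2" where "tzero = (\<lambda>uv. 0)"
definition tone :: "('k::{zero,one}) fa2" where
  "tone = (\<lambda>(u,v). if u = [] \<and> v = [] then 1 else 0)"
definition tadd :: "('k::plus) fa2 \<Rightarrow> 'k fa2 \<Rightarrow> 'k fa2" where "tadd s t = (\<lambda>uv. s uv + t uv)"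
definition tsub :: "('k::minus) fa2 \<Rightarrow> 'k fa2 \<Rightarrow> 'k fa2" where "tsub s t = (\<lambda>uv. s uv - t uv)"
definition tmul :: "('k::comm_ring_1) fa2 \<Rightarrow> 'k fa2 \<Rightarrow> 'k fa2" where
  "tmul s t = (\<lambda>(u,v). \<Sum>i\<le>length u. \<Sum>j\<le>length v.
                 s (take i u, take j v) * t (drop i u, drop j v))"
definition ftensor :: "('k::times) fa \<Rightarrow> 'k fa \<Rightarrow> 'k fa2" where
  "ftensor p q = (\<lambda>(u,v). p u * q v)"

text \<open>I (x) F + F (x) I, the kernel of F (x) F \<rightarrow> (F/I) (x) (F/I).\<close>
inductive_set tideal :: "('k::comm_ring_1) fa set \<Rightarrow> 'k fa2 set" for I where
  zero: "tzero \<in> tideal I"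
| left: "a \<in> I \<Longrightarrow> b \<in> fa_carrier \<Longrightarrow> ftensor a b \<in> tideal I"
| right: "a \<in> fa_carrier \<Longrightarrow> b \<in> I \<Longrightarrow> ftensor a b \<in> tideal I"
| add: "s \<in> tideal I \<Longrightarrow> t \<in> tideal I \<Longrightarrow> tadd s t \<in> tideal I"

text \<open>Comultiplication on generators (same formulas for both algebras):
  Delta(G) = G (x) G, Delta(X) = X (x) 1 + G (x) X, extended multiplicatively.\<close>
definition delta_gen :: "bool \<Rightarrow> ('k::comm_ring_1) fa2" where
  "delta_gen b = (if b then tadd (ftensor fX fone) (ftensor fG fX) else ftensor fG fG)"

primrec delta_word :: "bool list \<Rightarrow> ('k::comm_ring_1) fa2" where
  "delta_word [] = tone"
| "delta_word (b # w) = tmul (delta_gen b) (delta_word w)"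

definition fDelta :: "('k::comm_ring_1) fa \<Rightarrow> 'k fa2" where
  "fDelta p = (\<lambda>uv. \<Sum>w\<in>{w. p w \<noteq> 0}. p w * delta_word w uv)"

definition feps :: "('k::comm_ring_1) fa \<Rightarrow> 'k" where
  "feps p = (\<Sum>w\<in>{w. p w \<noteq> 0}. p w * prod_list (map (\<lambda>b. if b then 0 else 1) w))"

definition tensor_map :: "(('k::comm_ring_1) fa \<Rightarrow> 'k fa) \<Rightarrow> 'k fa2 \<Rightarrow> 'k fa2" where
  "tensor_map \<phi> t = (\<lambda>uv. \<Sum>(u,v)\<in>{uv. t uv \<noteq> 0}.
                         t (u,v) * ftensor (\<phi> (fbasis u)) (\<phi> (fbasis v)) uv)"

definition fa_linear :: "(('k::comm_ring_1) fa \<Rightarrow> 'b) \<Rightarrow> ('b \<Rightarrow> 'b \<Rightarrow> 'b) \<Rightarrow> ('k \<Rightarrow> 'b \<Rightarrow> 'b) \<Rightarrow> bool" where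
  "fa_linear \<phi> add_op scale_op \<longleftrightarrow>
     (\<forall>p\<in>fa_carrier. \<forall>q\<in>fa_carrier. \<phi> (fadd p q) = add_op (\<phi> p) (\<phi> q)) \<and>
     (\<forall>p\<in>fa_carrier. \<forall>c. \<phi> (fscale c p) = scale_op c (\<phi> p))"

definition alg_closed_field :: "'k::field itself \<Rightarrow> bool" where
  "alg_closed_field _ \<longleftrightarrow> (\<forall>p :: 'k poly. degree p \<ge> 1 \<longrightarrow> (\<exists>x. poly p x = 0))"

end

(*
  J = G^(2n) is a central idempotent of wH: G commutes with J, X anticommutes with G and hence
  commutes with G^2, and G^(2n+1) = G gives J^2 = J. So wH is the direct sum of the two-sided
  ideals wH J and wH (1 - J), and Delta(J) = J (x) J makes wH J a bialgebra with unit J.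

  The relations of H are those of wH together with J = 1, and every relator of H becomes a
  consequence of the relations of wH after multiplication by J; hence the identity of the free
  algebra (G to alpha, X to eta) induces an isomorphism of wH J onto H.

  On wH (1 - J) we have G (1 - J) = G - G^(2n+1) = 0, so every word containing G vanishes, and
  X^2 (1 - J) = (1 - G^2)(1 - J) = 1 - J. Reading off the coefficients of the powers of X
  therefore identifies wH (1 - J) with k[y]/(y^2 - 1).
*)
theory Submission
  imports Defs
begin

section \<open>Arithmetic in the free algebra\<close>

abbreviation fsupp :: "('k::zero) fa \<Rightarrow> bool list set" where
  "fsupp p \<equiv> {w. p w \<noteq> 0}"

lemmas fa_pointwise_defs = fzero_def fadd_def fsub_def fscale_def

lemma fgen_eq_fbasis [simp]: "fgen b = fbasis [b]"
  by (simp add: fgen_def)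

lemma fone_eq_fbasis: "fone = fbasis []"
  by (simp add: fone_def fbasis_def fun_eq_iff)

lemma fmul_fbasis_left:
  "fmul (fbasis u) p w = (if take (length u) w = u then p (drop (length u) w) else 0)"
proof -
  have "fmul (fbasis u) p w
      = (\<Sum>i\<le>length w. if i = length u
           then (if take (length u) w = u then p (drop (length u) w) else 0) else 0)"
    unfolding fmul_def fbasis_def by (rule sum.cong) auto
  also have "\<dots> = (if take (length u) w = u then p (drop (length u) w) else 0)"
    by (auto simp: sum.delta)
  finally show ?thesis .
qed

lemma fmul_fbasis_fbasis [simp]: "fmul (fbasis u) (fbasis v) = (fbasis (u @ v) :: 'k::comm_ring_1 fa)"
proof
  fix w show "fmul (fbasis u) (fbasis v) w = (fbasis (u @ v) :: 'k fa) w"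
    unfolding fmul_fbasis_left by (auto simp: fbasis_def append_eq_conv_conj) (metis append_take_drop_id)
qed

lemma fmul_fone_left [simp]: "fmul fone p = p"
  by (simp add: fone_eq_fbasis fmul_fbasis_left fun_eq_iff)

lemma fmul_fone_right [simp]: "fmul p fone = p"
proof
  fix w
  have "fmul p fone w = (\<Sum>i\<le>length w. if i = length w then p w else 0)"
    unfolding fmul_def fone_def by (rule sum.cong) auto
  then show "fmul p fone w = p w" by simp
qed

lemma fmul_fzero_left [simp]: "fmul fzero p = fzero"
  by (simp add: fun_eq_iff fmul_def fzero_def)

lemma fmul_fzero_right [simp]: "fmul p fzero = fzero"
  by (simp add: fun_eq_iff fmul_def fzero_def)

lemma fmul_assoc: "fmul (fmul p q) r = fmul p (fmul q r)"
proof
  fix w :: "bool list"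
  define n where "n = length w"
  define F where "F = (\<lambda>j i. p (take j w) * q (take (i - j) (drop j w)) * r (drop i w))"
  have "fmul (fmul p q) r w = (\<Sum>i\<le>n. \<Sum>j\<le>i. F j i)"
    unfolding fmul_def F_def n_def
    by (auto simp: sum_distrib_right min_def drop_take intro!: sum.cong)
  also have "\<dots> = (\<Sum>(i, j)\<in>Sigma {..n} (\<lambda>i. {..i}). F j i)"
    by (simp add: sum.Sigma)
  also have "\<dots> = (\<Sum>(j, l)\<in>Sigma {..n} (\<lambda>j. {..n - j}). F j (j + l))"
    by (rule sum.reindex_bij_witness[where i="\<lambda>(j, l). (j + l, j)" and j="\<lambda>(i, j). (j, i - j)"]) auto
  also have "\<dots> = (\<Sum>j\<le>n. \<Sum>l\<le>n - j. F j (j + l))"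
    by (simp add: sum.Sigma)
  also have "\<dots> = fmul p (fmul q r) w"
    unfolding fmul_def F_def n_def
    by (auto simp: sum_distrib_left mult.assoc add.commute intro!: sum.cong)
  finally show "fmul (fmul p q) r w = fmul p (fmul q r) w" .
qed

lemma fmul_fadd_left: "fmul (fadd p q) r = fadd (fmul p r) (fmul q r)"
  by (simp add: fun_eq_iff fmul_def fadd_def distrib_right sum.distrib)

lemma fmul_fadd_right: "fmul r (fadd p q) = fadd (fmul r p) (fmul r q)"
  by (simp add: fun_eq_iff fmul_def fadd_def distrib_left sum.distrib)

lemma fmul_fsub_left: "fmul (fsub p q) r = fsub (fmul p r) (fmul q r)"
  by (simp add: fun_eq_iff fmul_def fsub_def left_diff_distrib sum_subtractf)

lemma fmul_fsub_right: "fmul r (fsub p q) = fsub (fmul r p) (fmul r q)"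
  by (simp add: fun_eq_iff fmul_def fsub_def right_diff_distrib sum_subtractf)

lemma fmul_fscale_left: "fmul (fscale c p) r = fscale c (fmul p r)"
  by (simp add: fun_eq_iff fmul_def fscale_def sum_distrib_left mult.assoc)

lemma fmul_fscale_right: "fmul r (fscale c p) = fscale c (fmul r p)"
  by (simp add: fun_eq_iff fmul_def fscale_def sum_distrib_left mult.left_commute)

lemmas fmul_distribs =
  fmul_fadd_left fmul_fadd_right fmul_fsub_left fmul_fsub_right fmul_fscale_left fmul_fscale_right

lemmas fmul_normalize =
  fmul_assoc fmul_distribs fmul_fone_left fmul_fone_right fmul_fzero_left fmul_fzero_right

lemma fpow_fbasis [simp]: "fpow (fbasis u) m = (fbasis (concat (replicate m u)) :: 'k::comm_ring_1 fa)"
  by (induction m) (simp_all add: fone_eq_fbasis)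

lemma fbasis_in_fa_carrier [simp]: "(fbasis u :: 'k::comm_ring_1 fa) \<in> fa_carrier"
proof -
  have "fsupp (fbasis u) \<subseteq> {u}" by (auto simp: fbasis_def)
  then show ?thesis unfolding fa_carrier_def by (auto intro: finite_subset)
qed

lemma fone_in_fa_carrier [simp]: "(fone :: 'k::comm_ring_1 fa) \<in> fa_carrier"
  by (simp add: fone_eq_fbasis)

lemma fzero_in_fa_carrier [simp]: "(fzero :: 'k::comm_ring_1 fa) \<in> fa_carrier"
  by (simp add: fa_carrier_def fzero_def)

lemma fadd_in_fa_carrier [simp]:
  "p \<in> fa_carrier \<Longrightarrow> q \<in> fa_carrier \<Longrightarrow> (fadd p q :: 'k::comm_ring_1 fa) \<in> fa_carrier"
  unfolding fa_carrier_def fadd_def by (auto intro: finite_subset[of _ "fsupp p \<union> fsupp q"])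

lemma fsub_in_fa_carrier [simp]:
  "p \<in> fa_carrier \<Longrightarrow> q \<in> fa_carrier \<Longrightarrow> (fsub p q :: 'k::comm_ring_1 fa) \<in> fa_carrier"
  unfolding fa_carrier_def fsub_def by (auto intro: finite_subset[of _ "fsupp p \<union> fsupp q"])

lemma fscale_in_fa_carrier [simp]: "p \<in> fa_carrier \<Longrightarrow> (fscale c p :: 'k::comm_ring_1 fa) \<in> fa_carrier"
  unfolding fa_carrier_def fscale_def by (auto intro: finite_subset[of _ "fsupp p"])

lemma fmul_in_fa_carrier [simp]:
  assumes "p \<in> fa_carrier" "q \<in> fa_carrier"
  shows "fmul p q \<in> fa_carrier"
proof -
  have "fsupp (fmul p q) \<subseteq> (\<lambda>(u, v). u @ v) ` (fsupp p \<times> fsupp q)"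
  proof
    fix w assume "w \<in> fsupp (fmul p q)"
    then obtain i where "p (take i w) * q (drop i w) \<noteq> 0"
      unfolding fmul_def by (auto elim: sum.not_neutral_contains_not_neutral)
    then show "w \<in> (\<lambda>(u, v). u @ v) ` (fsupp p \<times> fsupp q)"
      by (auto intro!: image_eqI[of _ _ "(take i w, drop i w)"])
  qed
  then show ?thesis using assms unfolding fa_carrier_def by (auto intro: finite_subset)
qed

lemma fa_carrier_induct [consumes 1, case_names zero add scale basis]:
  assumes "(p :: 'k::comm_ring_1 fa) \<in> fa_carrier"
    and "P fzero"
    and add: "\<And>p q. p \<in> fa_carrier \<Longrightarrow> q \<in> fa_carrier \<Longrightarrow> P p \<Longrightarrow> P q \<Longrightarrow> P (fadd p q)"
    and scale: "\<And>c p. p \<in> fa_carrier \<Longrightarrow> P p \<Longrightarrow> P (fscale c p)"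
    and basis: "\<And>w. P (fbasis w)"
  shows "P p"
proof -
  have "\<forall>p. fsupp p \<subseteq> F \<longrightarrow> P p" if "finite F" for F
    using that
  proof (induction F rule: finite_induct)
    case empty
    then show ?case using \<open>P fzero\<close> by (auto simp: fzero_def fun_eq_iff)
  next
    case (insert u F)
    show ?case
    proof (intro allI impI)
      fix p :: "'k fa" assume p: "fsupp p \<subseteq> insert u F"
      define p' where "p' = p(u := 0)"
      have p': "fsupp p' \<subseteq> F" using p by (auto simp: p'_def)
      then have "p' \<in> fa_carrier"
        using insert(1) unfolding fa_carrier_def by (auto intro: finite_subset)
      moreover have "p = fadd p' (fscale (p u) (fbasis u))"
        by (auto simp: fun_eq_iff fadd_def fscale_def fbasis_def p'_def)
      ultimately show "P p"
        using p' insert(3) by (metis add scale basis fbasis_in_fa_carrier fscale_in_fa_carrier)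
    qed
  qed
  then show ?thesis using assms(1) unfolding fa_carrier_def by blast
qed

lemma fideal_in_fa_carrier:
  assumes "R \<subseteq> (fa_carrier :: 'k::comm_ring_1 fa set)" "x \<in> fideal R"
  shows "x \<in> fa_carrier"
  using assms(2) by induction (use assms(1) in auto)

lemma fideal_lmul: "x \<in> fideal R \<Longrightarrow> a \<in> fa_carrier \<Longrightarrow> fmul a x \<in> fideal R"
  using fideal.mult[of x R a fone] by simp

lemma fideal_rmul: "x \<in> fideal R \<Longrightarrow> b \<in> fa_carrier \<Longrightarrow> fmul x b \<in> fideal R"
  using fideal.mult[of x R fone b] by simp

lemma fideal_fscale: "x \<in> fideal R \<Longrightarrow> fscale c x \<in> fideal R"
  using fideal_lmul[of x R "fscale c fone"] by (simp add: fmul_fscale_left)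

lemma fideal_fsub: "x \<in> fideal R \<Longrightarrow> y \<in> fideal R \<Longrightarrow> fsub x y \<in> fideal R"
proof -
  assume "x \<in> fideal R" "y \<in> fideal R"
  have "fsub x y = fadd x (fscale (-1) y)"
    by (simp add: fun_eq_iff fa_pointwise_defs)
  also have "\<dots> \<in> fideal R"
    by (intro fideal.add fideal_fscale) fact+
  finally show ?thesis .
qed

lemma fideal_fsub_commute: "fsub x y \<in> fideal R \<Longrightarrow> fsub y x \<in> fideal R"
  using fideal_fscale[of "fsub x y" R "-1"] by (simp add: fun_eq_iff fa_pointwise_defs)

lemma fideal_fsub_self: "fsub x x \<in> fideal R"
  using fideal.zero[of R] by (simp add: fzero_def fsub_def)

section \<open>Central idempotents modulo an ideal\<close>

definition principal_left_ideal :: "('k::comm_ring_1) fa \<Rightarrow> 'k fa set" where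
  "principal_left_ideal e = {fmul p e | p. p \<in> fa_carrier}"

definition central_mod :: "('k::comm_ring_1) fa set \<Rightarrow> 'k fa \<Rightarrow> bool" where
  "central_mod I e \<longleftrightarrow> (\<forall>a\<in>fa_carrier. fsub (fmul e a) (fmul a e) \<in> I)"

lemma central_modD: "central_mod I e \<Longrightarrow> a \<in> fa_carrier \<Longrightarrow> fsub (fmul e a) (fmul a e) \<in> I"
  by (simp add: central_mod_def)

lemma central_mod_fone_minus:
  assumes "central_mod (fideal R) e"
  shows "central_mod (fideal R) (fsub fone e)"
  unfolding central_mod_def
proof
  fix a :: "'a fa" assume "a \<in> fa_carrier"
  have "fsub (fmul (fsub fone e) a) (fmul a (fsub fone e)) = fsub (fmul a e) (fmul e a)"
    by (simp only: fmul_normalize) (simp add: fun_eq_iff fa_pointwise_defs)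
  also have "\<dots> \<in> fideal R"
    by (rule fideal_fsub_commute[OF central_modD[OF assms \<open>a \<in> fa_carrier\<close>]])
  finally show "fsub (fmul (fsub fone e) a) (fmul a (fsub fone e)) \<in> fideal R" .
qed

lemma principal_left_ideal_two_sided_mod:
  assumes "central_mod (fideal R) e" "x \<in> principal_left_ideal e" "a \<in> fa_carrier"
  shows "in_mod (fideal R) (principal_left_ideal e) (fmul a x)
       \<and> in_mod (fideal R) (principal_left_ideal e) (fmul x a)"
proof -
  obtain p where p: "p \<in> fa_carrier" "x = fmul p e"
    using assms(2) by (auto simp: principal_left_ideal_def)
  have "fsub (fmul a x) (fmul (fmul a p) e) \<in> fideal R"
    by (simp add: p fmul_assoc fideal_fsub_self)
  moreover have "fsub (fmul x a) (fmul (fmul p a) e) \<in> fideal R"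
  proof -
    have "fsub (fmul x a) (fmul (fmul p a) e) = fmul p (fsub (fmul e a) (fmul a e))"
      by (simp add: p fmul_assoc fmul_distribs)
    also have "\<dots> \<in> fideal R"
      by (rule fideal_lmul[OF central_modD[OF assms(1,3)] p(1)])
    finally show ?thesis .
  qed
  moreover have "fmul (fmul a p) e \<in> principal_left_ideal e" "fmul (fmul p a) e \<in> principal_left_ideal e"
    using p assms(3) by (auto simp: principal_left_ideal_def)
  ultimately show ?thesis by (auto simp: in_mod_def)
qed

lemma principal_left_ideal_in_fideal:
  assumes idem: "fsub e (fmul e e) \<in> fideal R"
    and "x \<in> principal_left_ideal e" "fmul x e \<in> fideal R"
  shows "x \<in> fideal R"
proof -
  obtain p where p: "p \<in> fa_carrier" "x = fmul p e"
    using assms(2) by (auto simp: principal_left_ideal_def)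
  have "x = fadd (fmul p (fsub e (fmul e e))) (fmul x e)"
    by (simp only: p fmul_normalize) (simp add: fun_eq_iff fa_pointwise_defs)
  also have "\<dots> \<in> fideal R"
    using fideal.add[OF fideal_lmul[OF idem p(1)] assms(3)] .
  finally show ?thesis .
qed

lemma principal_left_ideal_complement_in_fideal:
  assumes idem: "fsub e (fmul e e) \<in> fideal R" and "e \<in> fa_carrier"
    and x: "x \<in> principal_left_ideal e" and y: "y \<in> principal_left_ideal (fsub fone e)"
    and "fsub x y \<in> fideal R"
  shows "x \<in> fideal R"
proof (rule principal_left_ideal_in_fideal[OF idem x])
  obtain p where p: "p \<in> fa_carrier" "y = fmul p (fsub fone e)"
    using y by (auto simp: principal_left_ideal_def)
  have "fmul x e = fadd (fmul (fsub x y) e) (fmul p (fsub e (fmul e e)))"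
    by (simp only: p fmul_normalize) (simp add: fun_eq_iff fa_pointwise_defs)
  also have "\<dots> \<in> fideal R"
    using assms p by (intro fideal.add fideal_lmul fideal_rmul)
  finally show "fmul x e \<in> fideal R" .
qed

lemma fa_carrier_decompose:
  assumes "a \<in> fa_carrier"
  shows "\<exists>x\<in>principal_left_ideal e. \<exists>y\<in>principal_left_ideal (fsub fone e).
           fsub a (fadd x y) \<in> fideal R"
proof (intro bexI)
  have "fsub a (fadd (fmul a e) (fmul a (fsub fone e))) = fsub a a"
    by (simp only: fmul_normalize) (simp add: fun_eq_iff fa_pointwise_defs)
  then show "fsub a (fadd (fmul a e) (fmul a (fsub fone e))) \<in> fideal R"
    by (simp add: fideal_fsub_self)
qed (use assms in \<open>auto simp: principal_left_ideal_def\<close>)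

lemma central_mod_if_commutes_with_letters:
  assumes "e \<in> fa_carrier" "\<And>b. fsub (fmul e (fbasis [b])) (fmul (fbasis [b]) e) \<in> fideal R"
  shows "central_mod (fideal R) e"
  unfolding central_mod_def
proof
  have word: "fsub (fmul e (fbasis w)) (fmul (fbasis w) e) \<in> fideal R" for w
  proof (induction w)
    case Nil
    show ?case by (simp add: fone_eq_fbasis[symmetric] fideal_fsub_self)
  next
    case (Cons b w)
    have cons: "fbasis (b # w) = fmul (fbasis [b]) (fbasis w)"
      by simp
    have "fsub (fmul e (fbasis (b # w))) (fmul (fbasis (b # w)) e)
        = fadd (fmul (fsub (fmul e (fbasis [b])) (fmul (fbasis [b]) e)) (fbasis w))
               (fmul (fbasis [b]) (fsub (fmul e (fbasis w)) (fmul (fbasis w) e)))"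
      unfolding cons by (simp only: fmul_normalize) (simp add: fun_eq_iff fa_pointwise_defs)
    also have "\<dots> \<in> fideal R"
      using assms Cons by (intro fideal.add fideal_lmul fideal_rmul) auto
    finally show ?case .
  qed
  fix a :: "'a fa" assume "a \<in> fa_carrier"
  then show "fsub (fmul e a) (fmul a e) \<in> fideal R"
  proof (induction rule: fa_carrier_induct)
    case zero
    show ?case by (simp add: fideal_fsub_self)
  next
    case (add p q)
    have "fsub (fmul e (fadd p q)) (fmul (fadd p q) e)
        = fadd (fsub (fmul e p) (fmul p e)) (fsub (fmul e q) (fmul q e))"
      by (simp only: fmul_distribs) (simp add: fun_eq_iff fa_pointwise_defs)
    then show ?case
      using add(3,4) by (simp add: fideal.add)
  next
    case (scale c p)
    have "fsub (fmul e (fscale c p)) (fmul (fscale c p) e) = fscale c (fsub (fmul e p) (fmul p e))"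
      by (simp only: fmul_distribs) (simp add: fun_eq_iff fa_pointwise_defs algebra_simps)
    then show ?case
      using scale(2) by (simp add: fideal_fscale)
  qed (rule word)
qed

lemma fJ_eq_fbasis: "fJ n = fbasis (replicate (2 * n) False)"
  by (simp add: fJ_def)

lemma fJ_in_fa_carrier [simp]: "(fJ n :: 'k::comm_ring_1 fa) \<in> fa_carrier"
  by (simp add: fJ_eq_fbasis)

lemma wrels_subset_fa_carrier: "wrels n \<subseteq> (fa_carrier :: 'k::comm_ring_1 fa set)"
  by (auto simp: wrels_def)

lemma wrels_G_power:
  "fsub (fbasis (replicate (2 * n + 1) False)) (fbasis [False])
     \<in> (fideal (wrels n) :: 'k::comm_ring_1 fa set)"
  by (rule fideal.gen) (simp add: wrels_def)

lemma wrels_anticommute: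
  "fadd (fbasis [False, True]) (fbasis [True, False]) \<in> (fideal (wrels n) :: 'k::comm_ring_1 fa set)"
  by (rule fideal.gen) (simp add: wrels_def)

lemma wrels_X_square:
  "fsub (fbasis [True, True]) (fsub fone (fbasis [False, False]))
     \<in> (fideal (wrels n) :: 'k::comm_ring_1 fa set)"
  by (rule fideal.gen) (simp add: wrels_def)

lemma even_G_power_commutes_X:
  "fsub (fbasis (replicate (2 * m) False @ [True])) (fbasis (True # replicate (2 * m) False))
     \<in> (fideal (wrels n) :: 'k::comm_ring_1 fa set)"
proof (induction m)
  case 0
  show ?case by (simp add: fideal_fsub_self)
next
  case (Suc m)
  let ?G2m = "fbasis (replicate (2 * m) False) :: 'k fa"
  let ?r = "fadd (fbasis [False, True]) (fbasis [True, False]) :: 'k fa"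
  have "fsub (fbasis (replicate (2 * Suc m) False @ [True])) (fbasis (True # replicate (2 * Suc m) False))
      = fadd (fmul (fbasis [False, False])
                   (fsub (fbasis (replicate (2 * m) False @ [True]))
                         (fbasis (True # replicate (2 * m) False))))
             (fsub (fmul (fbasis [False]) (fmul ?r ?G2m)) (fmul ?r (fmul (fbasis [False]) ?G2m)))"
    \<comment> \<open>G^2 X - X G^2 = G (GX + XG) - (GX + XG) G\<close>
    by (simp only: fmul_normalize fmul_fbasis_fbasis) (simp add: fun_eq_iff fa_pointwise_defs)
  also have "\<dots> \<in> fideal (wrels n)"
    using Suc wrels_anticommute
    by (blast intro: fideal.add fideal_fsub fideal_lmul fideal_rmul
        fmul_in_fa_carrier fbasis_in_fa_carrier)
  finally show ?case .
qed

lemma central_mod_fJ: "central_mod (fideal (wrels n)) (fJ n :: 'k::comm_ring_1 fa)"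
proof (rule central_mod_if_commutes_with_letters)
  fix b :: bool
  show "fsub (fmul (fJ n) (fbasis [b])) (fmul (fbasis [b]) (fJ n)) \<in> (fideal (wrels n) :: 'k fa set)"
    using even_G_power_commutes_X[of n n]
    by (cases b) (simp_all add: fJ_eq_fbasis replicate_append_same fideal_fsub_self)
qed (simp add: fJ_eq_fbasis)

lemma fJ_idem_mod_wrels:
  assumes "n \<ge> 1"
  shows "fsub (fJ n) (fmul (fJ n) (fJ n)) \<in> (fideal (wrels n) :: 'k::comm_ring_1 fa set)"
proof -
  obtain m where m: "2 * n = Suc m" using assms by (cases "2 * n") auto
  have "fsub (fJ n) (fmul (fJ n) (fJ n))
      = fmul (fbasis (replicate m False)) (fsub (fbasis [False]) (fbasis (replicate (2 * n + 1) False)))"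
    by (simp add: fJ_eq_fbasis fmul_fsub_right m replicate_app_Cons_same flip: replicate_add)
  also have "\<dots> \<in> fideal (wrels n)"
    by (rule fideal_lmul[OF fideal_fsub_commute[OF wrels_G_power]]) simp
  finally show ?thesis .
qed

lemma W1_eq_principal_left_ideal: "W1 n = principal_left_ideal (fJ n)"
  by (simp add: W1_def principal_left_ideal_def)

lemma W2_eq_principal_left_ideal: "W2 n = principal_left_ideal (fsub fone (fJ n))"
  by (simp add: W2_def principal_left_ideal_def)

section \<open>The tensor square and the comultiplication\<close>

definition tscale :: "'k::comm_ring_1 \<Rightarrow> 'k fa2 \<Rightarrow> 'k fa2" where
  "tscale c t = (\<lambda>uv. c * t uv)"

inductive_set tspan :: "('k::comm_ring_1) fa2 set" where
  zero: "tzero \<in> tspan"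
| tensor: "a \<in> fa_carrier \<Longrightarrow> b \<in> fa_carrier \<Longrightarrow> ftensor a b \<in> tspan"
| add: "s \<in> tspan \<Longrightarrow> t \<in> tspan \<Longrightarrow> tadd s t \<in> tspan"

lemma tmul_ftensor: "tmul (ftensor a b) (ftensor c d) = ftensor (fmul a c) (fmul b d)"
  by (auto simp: fun_eq_iff tmul_def ftensor_def fmul_def sum_product mult_ac intro!: sum.cong)

lemma tmul_tadd_left: "tmul (tadd s t) r = tadd (tmul s r) (tmul t r)"
  by (auto simp: fun_eq_iff tmul_def tadd_def distrib_right sum.distrib)

lemma tmul_tadd_right: "tmul r (tadd s t) = tadd (tmul r s) (tmul r t)"
  by (auto simp: fun_eq_iff tmul_def tadd_def distrib_left sum.distrib)

lemma tmul_tsub_right: "tmul r (tsub s t) = tsub (tmul r s) (tmul r t)"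
  by (auto simp: fun_eq_iff tmul_def tsub_def right_diff_distrib sum_subtractf)

lemma tmul_tscale_left: "tmul (tscale c s) r = tscale c (tmul s r)"
  by (auto simp: fun_eq_iff tmul_def tscale_def sum_distrib_left mult.assoc)

lemma tmul_tzero_left [simp]: "tmul tzero r = tzero"
  by (auto simp: fun_eq_iff tmul_def tzero_def)

lemma tmul_tzero_right [simp]: "tmul r tzero = tzero"
  by (auto simp: fun_eq_iff tmul_def tzero_def)

lemma tone_eq_ftensor: "tone = ftensor fone (fone :: 'k::comm_ring_1 fa)"
  by (auto simp: fun_eq_iff tone_def ftensor_def fone_def)

lemma tspan_tmul: "s \<in> tspan \<Longrightarrow> t \<in> tspan \<Longrightarrow> tmul s t \<in> tspan"
proof (induction s rule: tspan.induct)
  case (tensor a b)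
  from tensor(3) show ?case
    by (induction t rule: tspan.induct)
       (auto simp: tmul_ftensor tmul_tadd_right tensor(1,2) intro!: tspan.intros)
qed (auto simp: tmul_tadd_left intro: tspan.intros)

lemma tspan_tscale: "t \<in> tspan \<Longrightarrow> tscale c t \<in> tspan"
proof (induction rule: tspan.induct)
  case zero
  have "tscale c tzero = tzero" by (simp add: tscale_def tzero_def)
  then show ?case by (simp add: tspan.zero)
next
  case (tensor a b)
  have "tscale c (ftensor a b) = ftensor (fscale c a) b"
    by (auto simp: fun_eq_iff tscale_def ftensor_def fscale_def)
  then show ?case using tensor by (simp add: tspan.tensor)
next
  case (add s t)
  have "tscale c (tadd s t) = tadd (tscale c s) (tscale c t)"
    by (auto simp: fun_eq_iff tscale_def tadd_def algebra_simps)
  then show ?case using add by (simp add: tspan.add)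
qed

lemma tmul_assoc_tspan:
  assumes "s \<in> tspan" "t \<in> tspan" "r \<in> tspan"
  shows "tmul (tmul s t) r = tmul s (tmul t r)"
  using assms
proof (induction s rule: tspan.induct)
  case (tensor a b)
  from tensor(3,4) show ?case
  proof (induction t rule: tspan.induct)
    case (tensor c d)
    from tensor(3) show ?case
      by (induction r rule: tspan.induct) (simp_all add: tmul_ftensor fmul_assoc tmul_tadd_right)
  qed (simp_all add: tmul_tadd_left tmul_tadd_right)
qed (simp_all add: tmul_tadd_left)

lemma tmul_tone_left: "t \<in> tspan \<Longrightarrow> tmul tone t = t"
  by (induction rule: tspan.induct) (simp_all add: tone_eq_ftensor tmul_ftensor tmul_tadd_right)

lemma tspan_in_t_carrier: "t \<in> tspan \<Longrightarrow> t \<in> t_carrier"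
proof (induction rule: tspan.induct)
  case zero
  then show ?case by (simp add: t_carrier_def tzero_def)
next
  case (tensor a b)
  have "{uv. ftensor a b uv \<noteq> 0} \<subseteq> fsupp a \<times> fsupp b" by (auto simp: ftensor_def)
  then show ?case using tensor unfolding t_carrier_def fa_carrier_def by (auto intro: finite_subset)
next
  case (add s t)
  have "{uv. tadd s t uv \<noteq> 0} \<subseteq> {uv. s uv \<noteq> 0} \<union> {uv. t uv \<noteq> 0}" by (auto simp: tadd_def)
  then show ?case using add unfolding t_carrier_def by (auto intro: finite_subset)
qed

lemma delta_gen_in_tspan: "delta_gen b \<in> tspan"
  by (auto simp: delta_gen_def intro!: tspan.intros)

lemma delta_word_in_tspan: "delta_word w \<in> tspan"
  by (induction w) (simp_all add: tone_eq_ftensor tspan.tensor tspan_tmul delta_gen_in_tspan)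

lemma delta_word_append: "delta_word (u @ v) = tmul (delta_word u) (delta_word v)"
  by (induction u) (simp_all add: tmul_tone_left delta_word_in_tspan tmul_assoc_tspan delta_gen_in_tspan)

lemma delta_word_replicate_False:
  "delta_word (replicate m False)
     = ftensor (fbasis (replicate m False)) (fbasis (replicate m False) :: 'k::comm_ring_1 fa)"
  by (induction m) (simp_all add: tone_eq_ftensor fone_eq_fbasis delta_gen_def tmul_ftensor)

lemma fDelta_eq_sum:
  assumes "finite S" "fsupp p \<subseteq> S"
  shows "fDelta p = (\<lambda>uv. \<Sum>w\<in>S. p w * delta_word w uv)"
  unfolding fDelta_def by (rule ext, rule sum.mono_neutral_left) (use assms in auto)

lemma fDelta_fadd:
  assumes "p \<in> fa_carrier" "q \<in> fa_carrier"
  shows "fDelta (fadd p q) = tadd (fDelta p) (fDelta q)"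
proof -
  have S: "finite (fsupp p \<union> fsupp q)" using assms by (auto simp: fa_carrier_def)
  have "fsupp (fadd p q) \<subseteq> fsupp p \<union> fsupp q" by (auto simp: fadd_def)
  then show ?thesis
    by (simp add: fDelta_eq_sum[OF S] tadd_def fadd_def distrib_right sum.distrib)
qed

lemma fDelta_fscale:
  assumes "p \<in> fa_carrier"
  shows "fDelta (fscale c p) = tscale c (fDelta p)"
proof -
  have S: "finite (fsupp p)" using assms by (auto simp: fa_carrier_def)
  have "fsupp (fscale c p) \<subseteq> fsupp p" by (auto simp: fscale_def)
  then show ?thesis
    by (simp add: fDelta_eq_sum[OF S] tscale_def fscale_def sum_distrib_left mult.assoc)
qed

lemma fDelta_fzero [simp]: "fDelta fzero = tzero"
  by (simp add: fDelta_def fzero_def tzero_def fun_eq_iff)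

lemma fDelta_fbasis [simp]: "fDelta (fbasis w) = delta_word w"
  by (simp add: fDelta_eq_sum[of "{w}"] fbasis_def)

lemma fDelta_in_tspan: "p \<in> fa_carrier \<Longrightarrow> fDelta p \<in> tspan"
  by (induction rule: fa_carrier_induct)
     (simp_all add: tspan.zero tspan.add fDelta_fadd fDelta_fscale tspan_tscale delta_word_in_tspan)

lemma fDelta_fmul_fbasis:
  "p \<in> fa_carrier \<Longrightarrow> fDelta (fmul p (fbasis v)) = tmul (fDelta p) (delta_word v)"
  by (induction rule: fa_carrier_induct)
     (simp_all add: fmul_distribs fDelta_fadd fDelta_fscale tmul_tadd_left tmul_tscale_left
        delta_word_append)

lemma tensor_map_id: "t \<in> t_carrier \<Longrightarrow> tensor_map (\<lambda>x. x) t = t"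
proof
  fix uv :: "bool list \<times> bool list"
  assume "t \<in> t_carrier"
  then have "finite {uv. t uv \<noteq> 0}" by (simp add: t_carrier_def)
  moreover have "tensor_map (\<lambda>x. x) t uv = (\<Sum>xy\<in>{uv. t uv \<noteq> 0}. if xy = uv then t uv else 0)"
    unfolding tensor_map_def by (rule sum.cong) (auto simp: ftensor_def fbasis_def split: prod.splits)
  ultimately show "tensor_map (\<lambda>x. x) t uv = t uv" by (simp add: sum.delta)
qed

lemma tideal_tmul_tspan:
  assumes "s \<in> tspan" "t \<in> tideal (fideal R)"
  shows "tmul s t \<in> tideal (fideal R)"
  using assms(2)
proof (induction rule: tideal.induct)
  case zero
  show ?case by (simp add: tideal.zero)
next
  case (left a b)
  from assms(1) show ?case
    by (induction rule: tspan.induct)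
       (auto simp: tmul_ftensor tmul_tadd_left
         intro!: tideal.zero tideal.add tideal.left fideal_lmul fmul_in_fa_carrier left)
next
  case (right a b)
  from assms(1) show ?case
    by (induction rule: tspan.induct)
       (auto simp: tmul_ftensor tmul_tadd_left
         intro!: tideal.zero tideal.add tideal.right fideal_lmul fmul_in_fa_carrier right)
qed (simp add: tmul_tadd_right tideal.add)

lemma fDelta_W1_absorbs_fJ_tensor:
  assumes "n \<ge> 1" "x \<in> W1 n"
  shows "tsub (fDelta x) (tmul (fDelta x) (ftensor (fJ n) (fJ n)))
           \<in> tideal (wI n :: 'k::comm_ring_1 fa set)"
proof -
  obtain p where p: "p \<in> fa_carrier" "x = fmul p (fJ n)"
    using assms(2) by (auto simp: W1_def)
  define J :: "'k fa" where "J = fJ n"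
  define e where "e = fsub J (fmul J J)"
  have JJ: "ftensor J J \<in> tspan"
    by (simp add: J_def fJ_eq_fbasis tspan.tensor)
  have "fDelta x = tmul (fDelta p) (ftensor J J)"
    using fDelta_fmul_fbasis[OF p(1)] by (simp add: p J_def fJ_eq_fbasis delta_word_replicate_False)
  then have "tsub (fDelta x) (tmul (fDelta x) (ftensor J J))
      = tmul (fDelta p) (tsub (ftensor J J) (ftensor (fmul J J) (fmul J J)))"
    by (simp add: tmul_assoc_tspan fDelta_in_tspan p JJ tmul_ftensor tmul_tsub_right)
  also have "tsub (ftensor J J) (ftensor (fmul J J) (fmul J J))
      = tadd (ftensor e J) (ftensor (fmul J J) e)"
    by (simp add: fun_eq_iff e_def tsub_def tadd_def ftensor_def fsub_def algebra_simps)
  also have "tmul (fDelta p) \<dots> \<in> tideal (fideal (wrels n))"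
  proof (rule tideal_tmul_tspan[OF fDelta_in_tspan[OF p(1)]])
    have e: "e \<in> fideal (wrels n)"
      unfolding e_def J_def by (rule fJ_idem_mod_wrels[OF assms(1)])
    moreover have "J \<in> fa_carrier" "fmul J J \<in> fa_carrier"
      by (simp_all add: J_def fJ_eq_fbasis)
    ultimately show "tadd (ftensor e J) (ftensor (fmul J J) e) \<in> tideal (fideal (wrels n))"
      by (intro tideal.add tideal.left[OF e] tideal.right[OF _ e])
  qed
  finally show ?thesis
    by (simp add: J_def wI_def)
qed

section \<open>Comparison with H\<close>

lemma fideal_wrels_subset_hrels: "fideal (wrels n) \<subseteq> (fideal (hrels n) :: 'k::comm_ring_1 fa set)"
proof
  fix p :: "'k fa" assume "p \<in> fideal (wrels n)"
  then show "p \<in> fideal (hrels n)"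
  proof (induction rule: fideal.induct)
    case (gen r)
    then consider "r = fsub (fbasis (replicate (2 * n + 1) False)) (fbasis [False])" | "r \<in> hrels n"
      by (auto simp: hrels_def wrels_def)
    then show ?case
    proof cases
      case 1
      have "r = fmul (fbasis [False]) (fsub (fbasis (replicate (2 * n) False)) fone)"
        by (simp add: 1 fmul_fsub_right fone_eq_fbasis)
      also have "\<dots> \<in> fideal (hrels n)"
        by (intro fideal_lmul fideal.gen) (simp_all add: hrels_def)
      finally show ?thesis .
    qed (rule fideal.gen)
  qed (auto intro: fideal.intros)
qed

lemma fideal_hrels_fmul_fJ:
  assumes "n \<ge> 1" "h \<in> fideal (hrels n)"
  shows "fmul h (fJ n) \<in> (fideal (wrels n) :: 'k::comm_ring_1 fa set)"
  using assms(2)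
proof (induction rule: fideal.induct)
  case (gen r)
  then consider "r = fsub (fJ n) fone" | "r \<in> wrels n"
    by (auto simp: hrels_def wrels_def fJ_def)
  then show ?case
  proof cases
    case 1
    have "fmul r (fJ n) = fsub (fmul (fJ n) (fJ n)) (fJ n)"
      by (simp add: 1 fmul_fsub_left)
    also have "\<dots> \<in> fideal (wrels n)"
      by (rule fideal_fsub_commute) (rule fJ_idem_mod_wrels[OF assms(1)])
    finally show ?thesis .
  next
    case 2
    then show ?thesis by (intro fideal_rmul fideal.gen) (simp_all add: fJ_eq_fbasis)
  qed
next
  case zero
  then show ?case by (simp add: fideal.zero)
next
  case (add x y)
  then show ?case by (simp add: fmul_fadd_left fideal.add)
next
  case (mult x a b)
  have "x \<in> fa_carrier"
    using mult(1) by (rule fideal_in_fa_carrier[rotated]) (auto simp: hrels_def)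
  have "fmul (fmul a (fmul x b)) (fJ n)
      = fsub (fmul a (fmul (fmul x (fJ n)) b)) (fmul (fmul a x) (fsub (fmul (fJ n) b) (fmul b (fJ n))))"
    by (simp only: fmul_normalize) (simp add: fun_eq_iff fa_pointwise_defs)
  also have "\<dots> \<in> fideal (wrels n)"
  proof (rule fideal_fsub)
    show "fmul a (fmul (fmul x (fJ n)) b) \<in> fideal (wrels n)"
      by (rule fideal.mult[OF mult(4,2,3)])
    have "fsub (fmul (fJ n) b) (fmul b (fJ n)) \<in> fideal (wrels n)"
      by (rule central_modD[OF central_mod_fJ mult(3)])
    then show "fmul (fmul a x) (fsub (fmul (fJ n) b) (fmul b (fJ n))) \<in> fideal (wrels n)"
      using mult(2) \<open>x \<in> fa_carrier\<close> by (simp add: fideal_lmul)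
  qed
  finally show ?case .
qed

lemma fmul_fJ_congruent_hrels:
  "h \<in> fa_carrier \<Longrightarrow> fsub (fmul h (fJ n)) h \<in> (fideal (hrels n) :: 'k::comm_ring_1 fa set)"
  using fideal_lmul[of "fsub (fJ n) fone" "hrels n" h]
  by (simp add: fideal.gen hrels_def fJ_def fmul_fsub_right)

section \<open>The corner w2 and k[y]/(y^2 - 1)\<close>

text \<open>The algebra map G \<mapsto> 0, X \<mapsto> y of the free algebra to k[y]. The carrier guard is what makes
  Abs_poly meaningful: only finitely supported elements have finitely many nonzero coefficients.\<close>

definition xpoly :: "'k::comm_ring_1 fa \<Rightarrow> 'k poly" where
  "xpoly p = (if p \<in> fa_carrier then Abs_poly (\<lambda>i. p (replicate i True)) else 0)"

definition of_xpoly :: "'k::comm_ring_1 poly \<Rightarrow> 'k fa" where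
  "of_xpoly f = (\<lambda>w. if \<forall>b\<in>set w. b then coeff f (length w) else 0)"

lemma replicate_True_iff: "w = replicate i True \<longleftrightarrow> (\<forall>b\<in>set w. b) \<and> length w = i"
  by (auto intro: replicate_eqI)

lemma coeff_xpoly:
  assumes "p \<in> fa_carrier"
  shows "coeff (xpoly p) i = p (replicate i True)"
proof -
  have "inj (\<lambda>i. replicate i True)"
    by (rule injI) (metis length_replicate)
  then have "finite ((\<lambda>i. replicate i True) -` fsupp p)"
    using assms by (intro finite_vimageI) (simp_all add: fa_carrier_def)
  then have "\<forall>\<^sub>\<infinity> i. p (replicate i True) = 0"
    by (simp add: eventually_cofinite vimage_def)
  then show ?thesis using assms by (simp add: xpoly_def Abs_poly_inverse)
qed

lemma xpoly_fzero [simp]: "xpoly fzero = 0"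
  by (rule poly_eqI) (simp add: coeff_xpoly, simp add: fzero_def)

lemma xpoly_fadd: "p \<in> fa_carrier \<Longrightarrow> q \<in> fa_carrier \<Longrightarrow> xpoly (fadd p q) = xpoly p + xpoly q"
  by (rule poly_eqI) (simp add: coeff_xpoly, simp add: fadd_def)

lemma xpoly_fsub: "p \<in> fa_carrier \<Longrightarrow> q \<in> fa_carrier \<Longrightarrow> xpoly (fsub p q) = xpoly p - xpoly q"
  by (rule poly_eqI) (simp add: coeff_xpoly, simp add: fsub_def)

lemma xpoly_fscale: "p \<in> fa_carrier \<Longrightarrow> xpoly (fscale c p) = smult c (xpoly p)"
  by (rule poly_eqI) (simp add: coeff_xpoly, simp add: fscale_def)

lemma xpoly_fmul: "p \<in> fa_carrier \<Longrightarrow> q \<in> fa_carrier \<Longrightarrow> xpoly (fmul p q) = xpoly p * xpoly q"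
  by (rule poly_eqI) (simp add: coeff_xpoly coeff_mult, simp add: fmul_def)

lemma xpoly_fbasis: "xpoly (fbasis w) = (if \<forall>b\<in>set w. b then monom 1 (length w) else 0)"
proof (rule poly_eqI)
  fix i
  have "coeff (xpoly (fbasis w)) i = (if w = replicate i True then 1 else 0)"
    by (simp add: coeff_xpoly, simp add: fbasis_def eq_commute)
  also have "\<dots> = coeff (if \<forall>b\<in>set w. b then monom 1 (length w) else 0) i"
    by (auto simp: replicate_True_iff)
  finally show "coeff (xpoly (fbasis w)) i = coeff (if \<forall>b\<in>set w. b then monom 1 (length w) else 0) i" .
qed

lemma xpoly_one_minus_fJ: "n \<ge> 1 \<Longrightarrow> xpoly (fsub fone (fJ n)) = 1"
  by (simp add: xpoly_fsub fJ_eq_fbasis xpoly_fbasis fone_eq_fbasis)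

lemma of_xpoly_in_fa_carrier [simp]: "of_xpoly f \<in> fa_carrier"
proof -
  have "fsupp (of_xpoly f) \<subseteq> (\<lambda>i. replicate i True) ` {..degree f}"
  proof
    fix w assume "w \<in> fsupp (of_xpoly f)"
    then have "\<forall>b\<in>set w. b" "coeff f (length w) \<noteq> 0"
      by (auto simp: of_xpoly_def split: if_splits)
    then show "w \<in> (\<lambda>i. replicate i True) ` {..degree f}"
      by (auto intro!: image_eqI[of _ _ "length w"] le_degree replicate_length_same[symmetric])
  qed
  then show ?thesis unfolding fa_carrier_def by (auto intro: finite_subset)
qed

lemma xpoly_of_xpoly [simp]: "xpoly (of_xpoly f) = f"
  by (rule poly_eqI) (simp add: coeff_xpoly, simp add: of_xpoly_def)

lemma of_xpoly_mult: "of_xpoly (f * g) = fmul (of_xpoly f) (of_xpoly g)"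
proof
  fix w :: "bool list"
  show "of_xpoly (f * g) w = fmul (of_xpoly f) (of_xpoly g) w"
  proof (cases "\<forall>b\<in>set w. b")
    case True
    then have "\<forall>b\<in>set (take i w). b" "\<forall>b\<in>set (drop i w). b" for i
      by (auto dest: in_set_takeD in_set_dropD)
    then have "fmul (of_xpoly f) (of_xpoly g) w = (\<Sum>i\<le>length w. coeff f i * coeff g (length w - i))"
      unfolding fmul_def of_xpoly_def using True by (intro sum.cong) (auto simp: min_def)
    moreover have "of_xpoly (f * g) w = coeff (f * g) (length w)"
      using True by (auto simp: of_xpoly_def)
    ultimately show ?thesis by (simp add: coeff_mult)
  next
    case False
    have "\<not> ((\<forall>b\<in>set (take i w). b) \<and> (\<forall>b\<in>set (drop i w). b))" for i
      using False by (metis Un_iff append_take_drop_id set_append)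
    then have "fmul (of_xpoly f) (of_xpoly g) w = 0"
      unfolding fmul_def of_xpoly_def by (intro sum.neutral) auto
    moreover have "of_xpoly (f * g) w = 0"
      using False by (auto simp: of_xpoly_def)
    ultimately show ?thesis by simp
  qed
qed

lemma of_xpoly_add: "of_xpoly (f + g) = fadd (of_xpoly f) (of_xpoly g)"
  by (auto simp: fun_eq_iff of_xpoly_def fadd_def)

lemma of_xpoly_smult: "of_xpoly (smult c f) = fscale c (of_xpoly f)"
  by (auto simp: fun_eq_iff of_xpoly_def fscale_def)

lemma of_xpoly_diff: "of_xpoly (f - g) = fsub (of_xpoly f) (of_xpoly g)"
  by (auto simp: fun_eq_iff of_xpoly_def fsub_def)

lemma of_xpoly_monom: "of_xpoly (monom 1 m) = fbasis (replicate m True)"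
  by (auto simp: fun_eq_iff of_xpoly_def fbasis_def coeff_monom replicate_True_iff)

lemma of_xpoly_0 [simp]: "of_xpoly 0 = fzero"
  by (simp add: fun_eq_iff of_xpoly_def fzero_def)

lemma y_square_minus_one_eq_monom: "[:-1, 0, 1:] = monom 1 2 - (1 :: 'a::comm_ring_1 poly)"
  by (simp add: poly_eq_iff coeff_monom coeff_pCons split: nat.split)

lemma of_xpoly_y_square_minus_one: "of_xpoly [:-1, 0, 1:] = fsub (fbasis [True, True]) fone"
  by (simp add: y_square_minus_one_eq_monom of_xpoly_diff of_xpoly_monom of_xpoly_monom[of 0, simplified]
      fone_eq_fbasis numeral_2_eq_2)

lemma xpoly_fideal_wrels: "p \<in> fideal (wrels n) \<Longrightarrow> [:-1, 0, 1:] dvd xpoly p"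
proof (induction rule: fideal.induct)
  case (gen r)
  then show ?case
    by (auto simp: wrels_def xpoly_fsub xpoly_fadd xpoly_fbasis fone_eq_fbasis numeral_2_eq_2
        y_square_minus_one_eq_monom)
next
  case (add x y)
  then show ?case
    by (simp add: xpoly_fadd fideal_in_fa_carrier[OF wrels_subset_fa_carrier])
next
  case (mult x a b)
  then show ?case
    by (simp add: xpoly_fmul fideal_in_fa_carrier[OF wrels_subset_fa_carrier])
qed simp

lemma fG_fmul_one_minus_fJ:
  "fmul (fbasis [False]) (fsub fone (fJ n)) \<in> (fideal (wrels n) :: 'k::comm_ring_1 fa set)"
proof -
  have "fmul (fbasis [False]) (fsub fone (fJ n))
      = fsub (fbasis [False]) (fbasis (replicate (2 * n + 1) False))"
    by (simp add: fJ_eq_fbasis fmul_fsub_right)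
  also have "\<dots> \<in> fideal (wrels n)"
    by (rule fideal_fsub_commute) (rule wrels_G_power)
  finally show ?thesis .
qed

lemma one_minus_fJ_normal_form:
  assumes "p \<in> fa_carrier"
  shows "fsub (fmul p (fsub fone (fJ n))) (fmul (of_xpoly (xpoly p)) (fsub fone (fJ n)))
           \<in> (fideal (wrels n) :: 'k::comm_ring_1 fa set)"
  using assms
proof (induction rule: fa_carrier_induct)
  case zero
  show ?case by (simp add: fideal_fsub_self)
next
  case (add p q)
  let ?K = "fsub fone (fJ n)"
  have "fsub (fmul (fadd p q) ?K) (fmul (of_xpoly (xpoly (fadd p q))) ?K)
      = fadd (fsub (fmul p ?K) (fmul (of_xpoly (xpoly p)) ?K))
             (fsub (fmul q ?K) (fmul (of_xpoly (xpoly q)) ?K))"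
    using add(1,2)
    by (simp only: xpoly_fadd of_xpoly_add fmul_distribs) (simp add: fun_eq_iff fa_pointwise_defs)
  then show ?case
    using add(3,4) by (simp add: fideal.add)
next
  case (scale c p)
  let ?K = "fsub fone (fJ n)"
  have "fsub (fmul (fscale c p) ?K) (fmul (of_xpoly (xpoly (fscale c p))) ?K)
      = fscale c (fsub (fmul p ?K) (fmul (of_xpoly (xpoly p)) ?K))"
    using scale(1)
    by (simp only: xpoly_fscale of_xpoly_smult fmul_distribs)
       (simp add: fun_eq_iff fa_pointwise_defs algebra_simps)
  then show ?case
    using scale(2) by (simp add: fideal_fscale)
next
  case (basis w)
  let ?K = "fsub fone (fJ n) :: 'k fa"
  show ?case
  proof (cases "\<forall>b\<in>set w. b")
    case True
    then have "replicate (length w) True = w"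
      by (intro replicate_length_same) simp
    then have "of_xpoly (xpoly (fbasis w)) = (fbasis w :: 'k fa)"
      using True by (auto simp: xpoly_fbasis of_xpoly_monom)
    then show ?thesis by (simp only: fideal_fsub_self)
  next
    case False
    then obtain u v where w: "w = u @ False # v"
      by (auto dest: split_list)
    have "of_xpoly (xpoly (fbasis w)) = (fzero :: 'k fa)"
      using False by (auto simp: xpoly_fbasis)
    then have "fsub (fmul (fbasis w) ?K) (fmul (of_xpoly (xpoly (fbasis w))) ?K)
        = fsub (fmul (fbasis u) (fmul (fmul (fbasis [False]) ?K) (fbasis v)))
               (fmul (fbasis (u @ [False])) (fsub (fmul ?K (fbasis v)) (fmul (fbasis v) ?K)))"
      unfolding w fJ_eq_fbasis
      by (simp only: fmul_normalize fmul_fbasis_fbasis) (simp add: fun_eq_iff fa_pointwise_defs)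
    also have "\<dots> \<in> fideal (wrels n)"
    proof (rule fideal_fsub)
      show "fmul (fbasis u) (fmul (fmul (fbasis [False]) ?K) (fbasis v)) \<in> fideal (wrels n)"
        by (rule fideal.mult[OF fG_fmul_one_minus_fJ]) simp_all
      show "fmul (fbasis (u @ [False])) (fsub (fmul ?K (fbasis v)) (fmul (fbasis v) ?K))
          \<in> fideal (wrels n)"
        by (rule fideal_lmul[OF central_modD[OF central_mod_fone_minus[OF central_mod_fJ]]]) simp_all
    qed
    finally show ?thesis .
  qed
qed

lemma y_square_minus_one_fmul_one_minus_fJ:
  "fmul (of_xpoly [:-1, 0, 1:]) (fsub fone (fJ n)) \<in> (fideal (wrels n) :: 'k::comm_ring_1 fa set)"
proof -
  let ?K = "fsub fone (fJ n) :: 'k fa"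
  have "fmul (of_xpoly [:-1, 0, 1:]) ?K
      = fsub (fmul (fsub (fbasis [True, True]) (fsub fone (fbasis [False, False]))) ?K)
             (fmul (fbasis [False]) (fmul (fbasis [False]) ?K))"
    unfolding of_xpoly_y_square_minus_one fJ_eq_fbasis
    by (simp only: fmul_normalize fmul_fbasis_fbasis) (simp add: fun_eq_iff fa_pointwise_defs)
  also have "\<dots> \<in> fideal (wrels n)"
    by (rule fideal_fsub[OF fideal_rmul[OF wrels_X_square] fideal_lmul[OF fG_fmul_one_minus_fJ]])
       (simp_all add: fJ_eq_fbasis)
  finally show ?thesis .
qed

lemma W2_in_wI_if_dvd_xpoly:
  assumes "n \<ge> 1" "x \<in> W2 n" "[:-1, 0, 1:] dvd xpoly x"
  shows "x \<in> (wI n :: 'k::comm_ring_1 fa set)"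
proof -
  let ?K = "fsub fone (fJ n) :: 'k fa"
  obtain p where p: "p \<in> fa_carrier" "x = fmul p ?K"
    using assms(2) by (auto simp: W2_def)
  have "xpoly x = xpoly p"
    by (simp add: p xpoly_fmul xpoly_one_minus_fJ[OF assms(1)])
  then obtain g where g: "xpoly p = g * [:-1, 0, 1:]"
    using assms(3) by (auto elim!: dvdE simp: mult.commute)
  have "x = fadd (fsub (fmul p ?K) (fmul (of_xpoly (xpoly p)) ?K))
                 (fmul (of_xpoly g) (fmul (of_xpoly [:-1, 0, 1:]) ?K))"
    unfolding g of_xpoly_mult fmul_assoc by (simp add: p fun_eq_iff fa_pointwise_defs)
  also have "\<dots> \<in> fideal (wrels n)"
    by (rule fideal.add[OF one_minus_fJ_normal_form[OF p(1)]
          fideal_lmul[OF y_square_minus_one_fmul_one_minus_fJ]])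
       simp
  finally show ?thesis
    by (simp add: wI_def)
qed

lemma ex_W1_iso_H:
  fixes n :: nat
  assumes "n \<ge> 1"
  shows "\<exists>\<phi> :: 'k::comm_ring_1 fa \<Rightarrow> 'k fa.
        (\<forall>p\<in>fa_carrier. \<phi> p \<in> fa_carrier) \<and> fa_linear \<phi> fadd fscale
      \<and> (\<forall>p\<in>wI n. \<phi> p \<in> hI n)
      \<and> (\<forall>x\<in>W1 n. \<phi> x \<in> hI n \<longrightarrow> x \<in> wI n)
      \<and> (\<forall>h\<in>fa_carrier. \<exists>x\<in>W1 n. fsub (\<phi> x) h \<in> hI n)
      \<and> fsub (\<phi> (fJ n)) fone \<in> hI n
      \<and> (\<forall>x\<in>W1 n. \<forall>y\<in>W1 n. fsub (\<phi> (fmul x y)) (fmul (\<phi> x) (\<phi> y)) \<in> hI n)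
      \<and> (\<forall>x\<in>W1 n. feps (\<phi> x) = feps x)
      \<and> (\<forall>x\<in>W1 n. tsub (tensor_map \<phi> (fDelta x)) (fDelta (\<phi> x)) \<in> tideal (hI n))"
proof (intro exI[of _ "\<lambda>x. x"] conjI ballI impI)
  show "fa_linear (\<lambda>x. x) fadd fscale"
    by (simp add: fa_linear_def)
  show "p \<in> hI n" if "p \<in> wI n" for p :: "'k fa"
    using that fideal_wrels_subset_hrels by (auto simp: wI_def hI_def)
  show "x \<in> wI n" if "x \<in> W1 n" "x \<in> hI n" for x :: "'k fa"
    using principal_left_ideal_in_fideal[OF fJ_idem_mod_wrels[OF assms]]
      fideal_hrels_fmul_fJ[OF assms] that
    by (metis wI_def hI_def W1_eq_principal_left_ideal)
  show "\<exists>x\<in>W1 n. fsub x h \<in> hI n" if "h \<in> fa_carrier" for h :: "'k fa"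
    using that fmul_fJ_congruent_hrels[OF that] by (auto simp: W1_def hI_def)
  show "fsub (fJ n) fone \<in> (hI n :: 'k fa set)"
    by (simp add: hI_def hrels_def fJ_def fideal.gen)
  show "fsub (fmul x y) (fmul x y) \<in> hI n" for x y :: "'k fa"
    by (simp add: hI_def fideal_fsub_self)
  show "tsub (tensor_map (\<lambda>x. x) (fDelta x)) (fDelta x) \<in> tideal (hI n)" if "x \<in> W1 n" for x :: "'k fa"
  proof -
    have "fDelta x \<in> t_carrier"
      using that by (auto simp: W1_def intro!: tspan_in_t_carrier fDelta_in_tspan)
    then show ?thesis
      using tideal.zero by (simp add: tensor_map_id tsub_def tzero_def)
  qed
qed simp_all

lemma ex_W2_iso_quotient:
  fixes n :: nat
  assumes "n \<ge> 1"
  shows "\<exists>\<chi> :: 'k::comm_ring_1 fa \<Rightarrow> 'k poly.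
        fa_linear \<chi> (+) smult
      \<and> (\<forall>p\<in>wI n. [:-1, 0, 1:] dvd \<chi> p)
      \<and> (\<forall>x\<in>W2 n. [:-1, 0, 1:] dvd \<chi> x \<longrightarrow> x \<in> wI n)
      \<and> (\<forall>f. \<exists>x\<in>W2 n. [:-1, 0, 1:] dvd \<chi> x - f)
      \<and> [:-1, 0, 1:] dvd \<chi> (fsub fone (fJ n)) - 1
      \<and> (\<forall>x\<in>W2 n. \<forall>y\<in>W2 n. [:-1, 0, 1:] dvd \<chi> (fmul x y) - \<chi> x * \<chi> y)"
proof (intro exI[of _ xpoly] conjI ballI impI allI)
  show "fa_linear xpoly (+) smult"
    by (simp add: fa_linear_def xpoly_fadd xpoly_fscale)
  show "[:-1, 0, 1:] dvd xpoly p" if "p \<in> wI n" for p :: "'k fa"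
    using that by (simp add: wI_def xpoly_fideal_wrels)
  show "x \<in> wI n" if "x \<in> W2 n" "[:-1, 0, 1:] dvd xpoly x" for x :: "'k fa"
    using W2_in_wI_if_dvd_xpoly[OF assms that] .
  show "\<exists>x\<in>W2 n. [:-1, 0, 1:] dvd xpoly x - f" for f :: "'k poly"
  proof
    show "fmul (of_xpoly f) (fsub fone (fJ n)) \<in> W2 n"
      by (auto simp: W2_def)
    show "[:-1, 0, 1:] dvd xpoly (fmul (of_xpoly f) (fsub fone (fJ n))) - f"
      by (simp add: xpoly_fmul xpoly_one_minus_fJ[OF assms])
  qed
  show "[:-1, 0, 1:] dvd xpoly (fsub fone (fJ n) :: 'k fa) - 1"
    by (simp add: xpoly_one_minus_fJ[OF assms])
  show "[:-1, 0, 1:] dvd xpoly (fmul x y) - xpoly x * xpoly y"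
    if "x \<in> W2 n" "y \<in> W2 n" for x y :: "'k fa"
    using that by (auto simp: W2_def xpoly_fmul)
qed

theorem proposition5p1:
  fixes n :: nat and q :: "'k::field_char_0"
  assumes "alg_closed_field TYPE('k)"
    and "n \<ge> 1"
    and "q ^ (2*n) = 1" and "\<forall>m. 0 < m \<and> m < 2*n \<longrightarrow> q ^ m \<noteq> 1"
  shows
    "(\<forall>x\<in>(W1 n :: 'k fa set). \<forall>a\<in>fa_carrier.
        in_mod (wI n) (W1 n) (fmul a x) \<and> in_mod (wI n) (W1 n) (fmul x a))
   \<and> (\<forall>x\<in>(W2 n :: 'k fa set). \<forall>a\<in>fa_carrier.
        in_mod (wI n) (W2 n) (fmul a x) \<and> in_mod (wI n) (W2 n) (fmul x a))
   \<and> (\<forall>x\<in>(W1 n :: 'k fa set). \<forall>y\<in>W2 n. fsub x y \<in> wI n \<longrightarrow> x \<in> wI n)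
   \<and> (\<forall>a\<in>(fa_carrier :: 'k fa set). \<exists>x\<in>W1 n. \<exists>y\<in>W2 n. fsub a (fadd x y) \<in> wI n)
   \<and> (\<forall>x\<in>(W1 n :: 'k fa set).
        tsub (fDelta x) (tmul (fDelta x) (ftensor (fJ n) (fJ n))) \<in> tideal (wI n))
   \<and> (\<exists>\<phi> :: 'k fa \<Rightarrow> 'k fa.
        (\<forall>p\<in>fa_carrier. \<phi> p \<in> fa_carrier) \<and> fa_linear \<phi> fadd fscale
      \<and> (\<forall>p\<in>wI n. \<phi> p \<in> hI n)
      \<and> (\<forall>x\<in>W1 n. \<phi> x \<in> hI n \<longrightarrow> x \<in> wI n)
      \<and> (\<forall>h\<in>fa_carrier. \<exists>x\<in>W1 n. fsub (\<phi> x) h \<in> hI n)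
      \<and> fsub (\<phi> (fJ n)) fone \<in> hI n
      \<and> (\<forall>x\<in>W1 n. \<forall>y\<in>W1 n. fsub (\<phi> (fmul x y)) (fmul (\<phi> x) (\<phi> y)) \<in> hI n)
      \<and> (\<forall>x\<in>W1 n. feps (\<phi> x) = feps x)
      \<and> (\<forall>x\<in>W1 n. tsub (tensor_map \<phi> (fDelta x)) (fDelta (\<phi> x)) \<in> tideal (hI n)))
   \<and> (\<exists>\<chi> :: 'k fa \<Rightarrow> 'k poly.
        fa_linear \<chi> (+) smult
      \<and> (\<forall>p\<in>wI n. [:-1, 0, 1:] dvd \<chi> p)
      \<and> (\<forall>x\<in>W2 n. [:-1, 0, 1:] dvd \<chi> x \<longrightarrow> x \<in> wI n)
      \<and> (\<forall>f. \<exists>x\<in>W2 n. [:-1, 0, 1:] dvd \<chi> x - f)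
      \<and> [:-1, 0, 1:] dvd \<chi> (fsub fone (fJ n)) - 1
      \<and> (\<forall>x\<in>W2 n. \<forall>y\<in>W2 n. [:-1, 0, 1:] dvd \<chi> (fmul x y) - \<chi> x * \<chi> y))"
proof -
  \<comment> \<open>Everything holds over any commutative ring: q does not occur in the presentations.\<close>
  have J: "central_mod (fideal (wrels n)) (fJ n :: 'k fa)" "fJ n \<in> (fa_carrier :: 'k fa set)"
    by (rule central_mod_fJ, simp)
  have idem: "fsub (fJ n) (fmul (fJ n) (fJ n)) \<in> (fideal (wrels n) :: 'k fa set)"
    using fJ_idem_mod_wrels \<open>n \<ge> 1\<close> .
  show ?thesis
    using principal_left_ideal_two_sided_mod[OF J(1)]
      principal_left_ideal_two_sided_mod[OF central_mod_fone_minus[OF J(1)]]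
      principal_left_ideal_complement_in_fideal[OF idem J(2)]
      fa_carrier_decompose[where e = "fJ n :: 'k fa" and R = "wrels n"]
      fDelta_W1_absorbs_fJ_tensor[OF \<open>n \<ge> 1\<close>] ex_W1_iso_H[OF \<open>n \<ge> 1\<close>] ex_W2_iso_quotient[OF \<open>n \<ge> 1\<close>]
    unfolding wI_def W1_eq_principal_left_ideal W2_eq_principal_left_ideal
    by (intro conjI; (blast | auto))
qed

end
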